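(* Let $\mathcal{D}[t]\subset\mathcal{H}\subset\mathcal{D}^\times[t^\times]$ be a rigged Hilbert space with $\mathcal{D}[t]$ complete and reflexive, and let $\{\xi_n\}\subset\mathcal{D}$ be a Riesz-Fischer-like sequence. Define the operator $V$ by $$D(V)=\Big\{\Phi\in\mathcal{D}^\times:\ \sum_{k=1}^\infty|\langle\Phi,\xi_k\rangle|^2<\infty\Big\},\qquad V\Phi=\{\langle\Phi,\xi_k\rangle\}_{k\in\mathbb{N}}.$$ Then $V:D(V)\to\ell^2$ is surjective.
   Context: A rigged Hilbert space $\mathcal{D}[t]\subset\mathcal{H}\subset\mathcal{D}^\times[t^\times]$: $\mathcal{D}$ is a dense subspace of the Hilbert space $\mathcal{H}$ with a locally convex topology $t$ finer than the norm topology, $\mathcal{D}^\times$ is the space of continuous conjugate-linear functionals on $\mathcal{D}[t]$ with the strong dual topology $t^\times$, $\mathcal{H}\subset\mathcal{D}^\times$, and the duality form $\langle\Phi,\eta\rangle$ (value of $\Phi\in\mathcal{D}^\times$ at $\eta\in\mathcal{D}$) extends the inner product. $\mathcal{L}(\mathcal{D},\mathcal{D}^\times)$ denotes the continuous linear maps $\mathcal{D}[t]\to\mathcal{D}^\times[t^\times]$; for $X$ in it, the adjoint $X^\dagger\in\mathcal{L}(\mathcal{D},\mathcal{D}^\times)$ is defined by $\langle X^\dagger\eta,\xi\rangle=\overline{\langle X\xi,\eta\rangle}$. $\mathcal{C}(\mathcal{D},\mathcal{H})$ is the set of $X\in\mathcal{L}(\mathcal{D},\mathcal{D}^\times)$ mapping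 $\mathcal{D}$ into $\mathcal{H}$ and continuous from $\mathcal{D}[t]$ into $\mathcal{H}$; for such $X$, $X^\dagger$ extends continuously to a map $\mathcal{H}\to\mathcal{D}^\times$. A sequence $\{\xi_n\}\subset\mathcal{D}$ is Riesz-Fischer-like if for every orthonormal basis $\{e_n\}$ of $\mathcal{H}$ there exists $S\in\mathcal{C}(\mathcal{D},\mathcal{H})$ with $S\xi_n=e_n$ for all $n$. *)

theory Defs
  imports "HOL-Analysis.Analysis" "HOL-Library.Function_Algebras"
begin

class complex_vector = ab_group_add +
  fixes cscale :: "complex \<Rightarrow> 'a \<Rightarrow> 'a"  (infixr \<open>*\<^sub>C\<close> 75)
  assumes cscale_add_right: "a *\<^sub>C (x + y) = a *\<^sub>C x + a *\<^sub>C y"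
    and cscale_add_left: "(a + b) *\<^sub>C x = a *\<^sub>C x + b *\<^sub>C x"
    and cscale_cscale: "a *\<^sub>C (b *\<^sub>C x) = (a * b) *\<^sub>C x"
    and cscale_one: "1 *\<^sub>C x = x"

instantiation complex :: complex_vector
begin
definition cscale_complex_def: "a *\<^sub>C (z::complex) = a * z"
instance by standard (auto simp: cscale_complex_def algebra_simps)
end

instantiation "fun" :: (type, complex_vector) complex_vector
begin
definition cscale_fun_def: "a *\<^sub>C (f::'a \<Rightarrow> 'b) = (\<lambda>x. a *\<^sub>C f x)"
instance by standard
  (auto simp: cscale_fun_def fun_eq_iff cscale_add_right cscale_add_left cscale_cscale cscale_one)
end

class complex_inner = complex_vector + real_normed_vector +
  fixes cinner :: "'a \<Rightarrow> 'a \<Rightarrow> complex"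
  assumes scaleR_cscale: "scaleR r x = complex_of_real r *\<^sub>C x"
    and cinner_add_left: "cinner (x + y) z = cinner x z + cinner y z"
    and cinner_cscale_left: "cinner (a *\<^sub>C x) y = a * cinner x y"
    and cinner_commute: "cinner y x = cnj (cinner x y)"
    and cinner_self_norm: "cinner x x = complex_of_real ((norm x)\<^sup>2)"

text \<open>A complex Hilbert space is a complete complex inner product space:
  use the sort complex_inner + complete_space.\<close>

definition complex_subspace :: "'a::complex_vector set \<Rightarrow> bool" where
  "complex_subspace E \<longleftrightarrow> 0 \<in> E \<and> (\<forall>x\<in>E. \<forall>y\<in>E. x + y \<in> E) \<and> (\<forall>c. \<forall>x\<in>E. c *\<^sub>C x \<in> E)"

definition cspan :: "'a::complex_vector set \<Rightarrow> 'a set" where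
  "cspan A = {x. \<exists>F c. finite F \<and> F \<subseteq> A \<and> x = (\<Sum>a\<in>F. c a *\<^sub>C a)}"

definition orthonormal_basis :: "(nat \<Rightarrow> 'a::complex_inner) \<Rightarrow> bool" where
  "orthonormal_basis e \<longleftrightarrow>
     (\<forall>m n. cinner (e m) (e n) = (if m = n then 1 else 0)) \<and> closure (cspan (range e)) = UNIV"

definition cconvex :: "'a::complex_vector set \<Rightarrow> bool" where
  "cconvex C \<longleftrightarrow> (\<forall>x\<in>C. \<forall>y\<in>C. \<forall>u::real. 0 \<le> u \<and> u \<le> 1 \<longrightarrow>
      complex_of_real u *\<^sub>C x + complex_of_real (1 - u) *\<^sub>C y \<in> C)"

text \<open>A locally convex space is given by its carrier (the topspace) and its topology.\<close>
definition locally_convex_space :: "'a::complex_vector topology \<Rightarrow> bool" where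
  "locally_convex_space T \<longleftrightarrow>
     complex_subspace (topspace T) \<and>
     continuous_map (prod_topology T T) T (\<lambda>(x, y). x + y) \<and>
     continuous_map (prod_topology euclidean T) T (\<lambda>(c, x). c *\<^sub>C x) \<and>
     (\<forall>U. openin T U \<and> 0 \<in> U \<longrightarrow> (\<exists>W. openin T W \<and> 0 \<in> W \<and> W \<subseteq> U \<and> cconvex W))"

definition tvs_bounded :: "'a::complex_vector topology \<Rightarrow> 'a set \<Rightarrow> bool" where
  "tvs_bounded T B \<longleftrightarrow> B \<subseteq> topspace T \<and>
     (\<forall>U. openin T U \<and> 0 \<in> U \<longrightarrow>
        (\<exists>s>0. \<forall>c. s \<le> cmod c \<longrightarrow> B \<subseteq> (\<lambda>u. c *\<^sub>C u) ` U))"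

definition tvs_complete :: "'a::complex_vector topology \<Rightarrow> bool" where
  "tvs_complete T \<longleftrightarrow>
     (\<forall>F. F \<noteq> bot \<and> eventually (\<lambda>x. x \<in> topspace T) F \<and>
        (\<forall>U. openin T U \<and> 0 \<in> U \<longrightarrow>
           (\<exists>A. eventually (\<lambda>x. x \<in> A) F \<and> (\<forall>x\<in>A. \<forall>y\<in>A. x - y \<in> U)))
        \<longrightarrow> (\<exists>x. limitin T id x F))"

definition conj_linear_on :: "'a::complex_vector set \<Rightarrow> ('a \<Rightarrow> complex) \<Rightarrow> bool" where
  "conj_linear_on E f \<longleftrightarrow> (\<forall>x\<in>E. \<forall>y\<in>E. f (x + y) = f x + f y) \<and>
                          (\<forall>c. \<forall>x\<in>E. f (c *\<^sub>C x) = cnj c * f x)"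

definition linear_on :: "'a::complex_vector set \<Rightarrow> ('a \<Rightarrow> 'b::complex_vector) \<Rightarrow> bool" where
  "linear_on E f \<longleftrightarrow> (\<forall>x\<in>E. \<forall>y\<in>E. f (x + y) = f x + f y) \<and>
                     (\<forall>c. \<forall>x\<in>E. f (c *\<^sub>C x) = c *\<^sub>C f x)"

text \<open>The (conjugate) dual: continuous conjugate-linear functionals on the carrier,
  represented extensionally (value 0 off the carrier).\<close>
definition cdual :: "'a::complex_vector topology \<Rightarrow> ('a \<Rightarrow> complex) set" where
  "cdual T = {f. conj_linear_on (topspace T) f \<and> continuous_map T euclidean f \<and>
                 (\<forall>x. x \<notin> topspace T \<longrightarrow> f x = 0)}"

definition strong_dual :: "'a::complex_vector topology \<Rightarrow> ('a \<Rightarrow> complex) topology" where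
  "strong_dual T = topology (\<lambda>S. S \<subseteq> cdual T \<and>
     (\<forall>f\<in>S. \<exists>B e. tvs_bounded T B \<and> e > 0 \<and>
        {g \<in> cdual T. \<forall>x\<in>B. cmod (g x - f x) < e} \<subseteq> S))"

definition canonical_bidual :: "'a::complex_vector topology \<Rightarrow> 'a \<Rightarrow> ('a \<Rightarrow> complex) \<Rightarrow> complex" where
  "canonical_bidual T x = (\<lambda>\<Phi>. if \<Phi> \<in> cdual T then cnj (\<Phi> x) else 0)"

definition tvs_reflexive :: "'a::complex_vector topology \<Rightarrow> bool" where
  "tvs_reflexive T \<longleftrightarrow> homeomorphic_map T (strong_dual (strong_dual T)) (canonical_bidual T)"

text \<open>Embedding of the Hilbert space into the space of conjugate-linear functionals on D:
  \<open>\<eta> \<mapsto> \<langle>\<eta>, \<cdot>\<rangle>\<close>, so that the duality form extends the inner product.\<close>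
definition hembed :: "'h::complex_inner topology \<Rightarrow> 'h \<Rightarrow> 'h \<Rightarrow> complex" where
  "hembed t \<eta> = (\<lambda>\<xi>. if \<xi> \<in> topspace t then cinner \<eta> \<xi> else 0)"

text \<open>D[t] \<subset> H \<subset> D^x[t^x], with D = topspace t.\<close>
definition rigged_hilbert_space :: "'h::{complex_inner, complete_space} topology \<Rightarrow> bool" where
  "rigged_hilbert_space t \<longleftrightarrow>
     locally_convex_space t \<and>
     closure (topspace t) = UNIV \<and>
     (\<forall>U. open U \<longrightarrow> openin t (U \<inter> topspace t)) \<and>
     (\<forall>\<eta>. hembed t \<eta> \<in> cdual t) \<and> inj (hembed t)"

definition Lcont :: "'h::{complex_inner, complete_space} topology \<Rightarrow> ('h \<Rightarrow> 'h \<Rightarrow> complex) set" where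
  "Lcont t = {X. linear_on (topspace t) X \<and> continuous_map t (strong_dual t) X}"

text \<open>\<open>C(D,H)\<close>: elements of \<open>L(D,D^x)\<close> mapping D into H continuously from D[t] to H.
  Via the identification H \<subset> D^x such an X is given by its H-valued map S, with
  X \<xi> = hembed t (S \<xi>).\<close>
definition CDH :: "'h::{complex_inner, complete_space} topology \<Rightarrow> ('h \<Rightarrow> 'h) set" where
  "CDH t = {S. (\<lambda>\<xi>. hembed t (S \<xi>)) \<in> Lcont t \<and> continuous_map t euclidean S}"

definition riesz_fischer_like :: "'h::{complex_inner, complete_space} topology \<Rightarrow> (nat \<Rightarrow> 'h) \<Rightarrow> bool" where
  "riesz_fischer_like t \<xi> \<longleftrightarrow> (\<forall>n. \<xi> n \<in> topspace t) \<and>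
     (\<forall>e. orthonormal_basis e \<longrightarrow> (\<exists>S \<in> CDH t. \<forall>n. S (\<xi> n) = e n))"

definition ell2 :: "(nat \<Rightarrow> complex) set" where
  "ell2 = {c. summable (\<lambda>k. (cmod (c k))\<^sup>2)}"

definition V_dom :: "'h::{complex_inner, complete_space} topology \<Rightarrow> (nat \<Rightarrow> 'h) \<Rightarrow> ('h \<Rightarrow> complex) set" where
  "V_dom t \<xi> = {\<Phi> \<in> cdual t. summable (\<lambda>k. (cmod (\<Phi> (\<xi> k)))\<^sup>2)}"

definition V_op :: "(nat \<Rightarrow> 'h) \<Rightarrow> ('h \<Rightarrow> complex) \<Rightarrow> (nat \<Rightarrow> complex)" where
  "V_op \<xi> \<Phi> = (\<lambda>k. \<Phi> (\<xi> k))"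

end

theory Submission
  imports Defs
begin

text \<open>Given \<open>c \<in> \<ell>\<^sup>2\<close>, pick an orthonormal basis \<open>e\<close>, realise \<open>c\<close> as the coefficient
  sequence of \<open>h = \<Sum>\<^sub>n c\<^sub>n e\<^sub>n\<close> (Riesz-Fischer), and take \<open>S \<in> C(D,H)\<close> with \<open>S \<xi>\<^sub>n = e\<^sub>n\<close>.
  Then \<open>\<Phi> = \<langle>h, S \<cdot>\<rangle>\<close> is a continuous conjugate-linear functional on \<open>D\<close> with
  \<open>\<Phi> \<xi>\<^sub>k = \<langle>h, e\<^sub>k\<rangle> = c\<^sub>k\<close>, so \<open>V \<Phi> = c\<close>.\<close>

lemma cinner_zero_left [simp]: "cinner 0 (y::'a::complex_inner) = 0"
  using cinner_add_left[of 0 0 y] by simp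

lemma cinner_zero_right [simp]: "cinner (y::'a::complex_inner) 0 = 0"
  using cinner_commute[of 0 y] by simp

lemma cinner_add_right: "cinner (x::'a::complex_inner) (y + z) = cinner x y + cinner x z"
  using cinner_commute[of x "y + z"] cinner_commute[of x y] cinner_commute[of x z]
    cinner_add_left[of y z x]
  by simp

lemma cinner_cscale_right: "cinner (x::'a::complex_inner) (a *\<^sub>C y) = cnj a * cinner x y"
  using cinner_commute[of x "a *\<^sub>C y"] cinner_commute[of x y] cinner_cscale_left[of a y x]
  by simp

lemma cinner_minus_left: "cinner (- x::'a::complex_inner) y = - cinner x y"
  using cinner_add_left[of "- x" x y] by (simp add: eq_neg_iff_add_eq_0)

lemma cinner_diff_left: "cinner (x - y::'a::complex_inner) z = cinner x z - cinner y z"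
  unfolding diff_conv_add_uminus cinner_add_left cinner_minus_left by simp

lemma cinner_sum_left:
  "finite F \<Longrightarrow> cinner (\<Sum>a\<in>F. f a) (y::'a::complex_inner) = (\<Sum>a\<in>F. cinner (f a) y)"
  by (induction F rule: finite_induct) (simp_all add: cinner_add_left)

lemma cinner_sum_right:
  "finite F \<Longrightarrow> cinner (y::'a::complex_inner) (\<Sum>a\<in>F. f a) = (\<Sum>a\<in>F. cinner y (f a))"
  by (induction F rule: finite_induct) (simp_all add: cinner_add_right)

lemma complex_cauchy_schwarz: "cmod (cinner (x::'a::complex_inner) y) \<le> norm x * norm y"
proof (cases "y = 0")
  case True
  then show ?thesis by simp
next
  case False
  define p where "p = cinner x y"
  define n where "n = (norm y)\<^sup>2"
  have n: "n > 0" using False by (simp add: n_def)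
  define a where "a = p / complex_of_real n"
  have yy: "cinner y y = complex_of_real n" by (simp add: cinner_self_norm n_def)
  \<comment> \<open>expand \<open>\<parallel>x - a y\<parallel>\<^sup>2 \<ge> 0\<close> for the projection coefficient \<open>a\<close>\<close>
  have "complex_of_real ((norm (x + (- a) *\<^sub>C y))\<^sup>2)
      = cinner x x + cnj (- a) * p + (- a) * cnj p + (- a) * cnj (- a) * complex_of_real n"
    unfolding cinner_self_norm[symmetric] cinner_add_left cinner_add_right cinner_cscale_left
      cinner_cscale_right yy cinner_commute[of y x] p_def
    by (simp add: algebra_simps)
  also have "\<dots> = complex_of_real ((norm x)\<^sup>2 - (cmod p)\<^sup>2 / n)"
    using n complex_norm_square[of p] unfolding a_def cinner_self_norm
    by (simp add: field_simps)
  finally have "(cmod p)\<^sup>2 / n \<le> (norm x)\<^sup>2"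
    by (smt (verit) of_real_eq_iff zero_le_power2)
  then have "(cmod p)\<^sup>2 \<le> (norm x * norm y)\<^sup>2"
    using n by (simp add: divide_le_eq n_def power_mult_distrib)
  then show ?thesis unfolding p_def by (rule power2_le_imp_le) simp
qed

lemma tendsto_cinner_left:
  assumes "(f \<longlongrightarrow> l) F"
  shows "((\<lambda>x. cinner (f x) (y::'a::complex_inner)) \<longlongrightarrow> cinner l y) F"
proof -
  have "((\<lambda>x. f x - l) \<longlongrightarrow> 0) F" using assms by (rule LIM_zero)
  then have "((\<lambda>x. cinner (f x) y - cinner l y) \<longlongrightarrow> 0) F"
    by (rule tendsto_0_le[where K = "norm y"])
      (simp add: complex_cauchy_schwarz flip: cinner_diff_left)
  then show ?thesis by (rule LIM_zero_cancel)
qed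

lemma continuous_on_cinner_right: "continuous_on UNIV (\<lambda>x. cinner (y::'a::complex_inner) x)"
proof (rule continuous_at_imp_continuous_on, intro ballI)
  fix z :: 'a
  have "((\<lambda>x. cnj (cinner x y)) \<longlongrightarrow> cnj (cinner z y)) (at z)"
    by (intro tendsto_cnj tendsto_cinner_left tendsto_ident_at)
  then show "isCont (cinner y) z"
    unfolding isCont_def by (simp flip: cinner_commute)
qed

lemma orthonormal_sum_cinner:
  assumes ortho: "\<And>m n. cinner (e m) (e n) = (if m = n then 1 else 0)" and "finite F"
  shows "cinner (\<Sum>n\<in>F. c n *\<^sub>C e n) (e k) = (if k \<in> F then c k else 0)"
proof -
  have "cinner (\<Sum>n\<in>F. c n *\<^sub>C e n) (e k) = (\<Sum>n\<in>F. if n = k then c n else 0)"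
    using \<open>finite F\<close> by (simp add: cinner_sum_left cinner_cscale_left ortho if_distrib cong: if_cong)
  also have "\<dots> = (if k \<in> F then c k else 0)" using \<open>finite F\<close> by (simp add: sum.delta')
  finally show ?thesis .
qed

lemma orthonormal_sum_norm_square:
  assumes ortho: "\<And>m n. cinner (e m) (e n) = (if m = n then 1 else 0)" and "finite F"
  shows "(norm (\<Sum>n\<in>F. c n *\<^sub>C e n))\<^sup>2 = (\<Sum>n\<in>F. (cmod (c n))\<^sup>2)"
proof -
  have "complex_of_real ((norm (\<Sum>n\<in>F. c n *\<^sub>C e n))\<^sup>2)
      = cinner (\<Sum>n\<in>F. c n *\<^sub>C e n) (\<Sum>n\<in>F. c n *\<^sub>C e n)"
    by (simp only: cinner_self_norm)
  also have "\<dots> = (\<Sum>k\<in>F. cnj (c k) * cinner (\<Sum>n\<in>F. c n *\<^sub>C e n) (e k))"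
    using \<open>finite F\<close> by (simp add: cinner_sum_right cinner_cscale_right)
  also have "\<dots> = (\<Sum>k\<in>F. cnj (c k) * c k)"
    using assms by (simp add: orthonormal_sum_cinner)
  also have "\<dots> = (\<Sum>k\<in>F. complex_of_real ((cmod (c k))\<^sup>2))"
    by (rule sum.cong) (simp_all only: complex_norm_square mult.commute)
  also have "\<dots> = complex_of_real (\<Sum>k\<in>F. (cmod (c k))\<^sup>2)"
    by (simp only: of_real_sum)
  finally show ?thesis by (simp only: of_real_eq_iff)
qed

lemma orthonormal_partial_sums_Cauchy:
  assumes ortho: "\<And>m n. cinner (e m) (e n) = (if m = n then 1 else 0)"
    and c: "c \<in> ell2"
  shows "Cauchy (\<lambda>N. \<Sum>n<N. c n *\<^sub>C e n)" (is "Cauchy ?s")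
proof (rule metric_CauchyI)
  fix r :: real
  assume "r > 0"
  then have "r\<^sup>2 > 0" by simp
  then obtain N where N: "\<And>m n. m \<ge> N \<Longrightarrow> norm (\<Sum>k=m..<n. (cmod (c k))\<^sup>2) < r\<^sup>2"
    using c unfolding ell2_def summable_Cauchy by blast
  have close: "dist (?s m) (?s n) < r" if "N \<le> n" "n \<le> m" for m n
  proof -
    have "?s m - ?s n = (\<Sum>k=n..<m. c k *\<^sub>C e k)"
      using sum_diff_nat_ivl[of 0 n m "\<lambda>k. c k *\<^sub>C e k"] \<open>n \<le> m\<close>
      by (simp add: atLeast0LessThan)
    then have "(dist (?s m) (?s n))\<^sup>2 = (\<Sum>k=n..<m. (cmod (c k))\<^sup>2)"
      by (simp add: dist_norm orthonormal_sum_norm_square[OF ortho])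
    also have "\<dots> < r\<^sup>2" using N[OF \<open>N \<le> n\<close>, of m] by simp
    finally show ?thesis using \<open>r > 0\<close> by (simp add: power_less_imp_less_base)
  qed
  show "\<exists>M. \<forall>m\<ge>M. \<forall>n\<ge>M. dist (?s m) (?s n) < r"
  proof (intro exI allI impI)
    fix m n assume "N \<le> m" "N \<le> n"
    then show "dist (?s m) (?s n) < r"
      using close[of n m] close[of m n] by (cases "n \<le> m") (simp_all add: dist_commute)
  qed
qed

lemma riesz_fischer:
  fixes e :: "nat \<Rightarrow> 'h::{complex_inner, complete_space}"
  assumes ortho: "\<And>m n. cinner (e m) (e n) = (if m = n then 1 else 0)"
    and c: "c \<in> ell2"
  shows "\<exists>h. \<forall>k. cinner h (e k) = c k"
proof -
  obtain h where h: "(\<lambda>N. \<Sum>n<N. c n *\<^sub>C e n) \<longlonglongrightarrow> h"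
    using orthonormal_partial_sums_Cauchy[OF ortho c] Cauchy_convergent convergent_def by blast
  have "cinner h (e k) = c k" for k
  proof -
    have "(\<lambda>N. cinner (\<Sum>n<N + Suc k. c n *\<^sub>C e n) (e k)) \<longlonglongrightarrow> cinner h (e k)"
      using LIMSEQ_ignore_initial_segment[OF tendsto_cinner_left[OF h]] .
    moreover have "cinner (\<Sum>n<N + Suc k. c n *\<^sub>C e n) (e k) = c k" for N
      using orthonormal_sum_cinner[OF ortho, of "{..<N + Suc k}" c k] by simp
    ultimately show ?thesis by (simp add: LIMSEQ_const_iff)
  qed
  then show ?thesis by blast
qed

lemma hembed_add: "hembed t (a + b) = hembed t a + hembed t b"
  by (rule ext) (simp add: hembed_def cinner_add_left)

lemma hembed_cscale: "hembed t (c *\<^sub>C a) = c *\<^sub>C hembed t a"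
  by (rule ext) (simp add: hembed_def cinner_cscale_left cscale_fun_def cscale_complex_def)

lemma CDH_linear_on:
  assumes "inj (hembed t)" and "S \<in> CDH t"
  shows "linear_on (topspace t) S"
proof -
  have "linear_on (topspace t) (\<lambda>\<xi>. hembed t (S \<xi>))"
    using \<open>S \<in> CDH t\<close> unfolding CDH_def Lcont_def by blast
  then show ?thesis
    unfolding linear_on_def hembed_add [symmetric] hembed_cscale [symmetric]
      inj_eq[OF \<open>inj (hembed t)\<close>] .
qed

lemma cinner_comp_in_cdual:
  assumes "complex_subspace (topspace t)" and "linear_on (topspace t) S"
    and "continuous_map t euclidean S"
  shows "(\<lambda>x. if x \<in> topspace t then cinner h (S x) else 0) \<in> cdual t"
proof -
  have "conj_linear_on (topspace t) (\<lambda>x. if x \<in> topspace t then cinner h (S x) else 0)"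
    using assms(1,2) unfolding complex_subspace_def linear_on_def conj_linear_on_def
    by (simp add: cinner_add_right cinner_cscale_right)
  moreover have "continuous_map t euclidean (cinner h \<circ> S)"
    using assms(3) by (rule continuous_map_compose) (simp add: continuous_on_cinner_right)
  then have "continuous_map t euclidean (\<lambda>x. if x \<in> topspace t then cinner h (S x) else 0)"
    by (rule continuous_map_eq) simp
  ultimately show ?thesis unfolding cdual_def by simp
qed

theorem proposition2p15:
  fixes t :: "'h::{complex_inner, complete_space} topology"
    and \<xi> :: "nat \<Rightarrow> 'h"
  assumes "rigged_hilbert_space t"
    and "\<exists>e. orthonormal_basis (e :: nat \<Rightarrow> 'h)"
    and "tvs_complete t"
    and "tvs_reflexive t"
    and "riesz_fischer_like t \<xi>"
  shows "V_op \<xi> ` V_dom t \<xi> = ell2"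
proof
  show "V_op \<xi> ` V_dom t \<xi> \<subseteq> ell2"
    by (auto simp: V_op_def V_dom_def ell2_def)
  show "ell2 \<subseteq> V_op \<xi> ` V_dom t \<xi>"
  proof
    fix c assume c: "c \<in> ell2"
    obtain e :: "nat \<Rightarrow> 'h" where e: "orthonormal_basis e" using assms(2) by blast
    obtain S where S: "S \<in> CDH t" and Se: "\<And>n. S (\<xi> n) = e n" and \<xi>D: "\<And>n. \<xi> n \<in> topspace t"
      using assms(5) e unfolding riesz_fischer_like_def by blast
    obtain h where h: "\<And>k. cinner h (e k) = c k"
      using riesz_fischer e c unfolding orthonormal_basis_def by blast
    define \<Phi> where "\<Phi> x = (if x \<in> topspace t then cinner h (S x) else 0)" for x
    have "\<Phi> \<in> cdual t" unfolding \<Phi>_def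
      using assms(1) S CDH_linear_on[of t S] cinner_comp_in_cdual[of t S h]
      unfolding rigged_hilbert_space_def locally_convex_space_def CDH_def by blast
    moreover have \<Phi>\<xi>: "\<Phi> (\<xi> k) = c k" for k
      by (simp add: \<Phi>_def \<xi>D Se h)
    ultimately have "\<Phi> \<in> V_dom t \<xi>"
      using c unfolding V_dom_def ell2_def by simp
    moreover have "V_op \<xi> \<Phi> = c"
      by (simp add: V_op_def \<Phi>\<xi>)
    ultimately show "c \<in> V_op \<xi> ` V_dom t \<xi>" by blast
  qed
qed

end
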